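(* Let $R_1,R_2$ be commutative rings with nonzero identity, let $I_1$ be a proper ideal of $R_1$ and $I_2$ a proper ideal of $R_2$, and put $R=R_1\times R_2$, $I=I_1\times I_2$. Then: (a) If at least one of the graphs $\Gamma''_{I_1}(R_1)$, $\Gamma''_{I_2}(R_2)$ is not totally disconnected (i.e. has at least one edge), then the girth of $\Gamma''_I(R)$ equals $3$. (b) If $R_1\setminus I_1\neq\{1_{R_1}\}$ and $R_2\setminus I_2\neq\{1_{R_2}\}$, then the girth of $\Gamma''_I(R)$ is at most $4$.
   Context: $R_1\times R_2$ has componentwise operations. For a commutative ring $S$ and an ideal $J$ of $S$, $\Gamma''_J(S)$ is the simple undirected graph whose vertex set is $\{x\in S\setminus J : xS+J\neq S\}$, and two distinct vertices $x,y$ are adjacent if and only if $x\notin yS+J$ and $y\notin xS+J$. A graph is totally disconnected if it has no edges. The girth of a graph is the length of a shortest cycle (and $\infty$ if there is no cycle). *)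

theory Defs
  imports Main "HOL-Library.Extended_Nat"
begin

text \<open>Ideals of a commutative ring (type class comm_ring_1, which includes 0 \<noteq> 1).\<close>
definition is_ideal :: "'a::comm_ring_1 set \<Rightarrow> bool" where
  "is_ideal I \<longleftrightarrow> 0 \<in> I \<and> (\<forall>x\<in>I. \<forall>y\<in>I. x + y \<in> I) \<and> (\<forall>x\<in>I. \<forall>r. r * x \<in> I)"

text \<open>Generic ring given by multiplication and addition on the whole type.
  The set xS + J.\<close>
definition princ_plus :: "('r \<Rightarrow> 'r \<Rightarrow> 'r) \<Rightarrow> ('r \<Rightarrow> 'r \<Rightarrow> 'r) \<Rightarrow> 'r set \<Rightarrow> 'r \<Rightarrow> 'r set" where
  "princ_plus mul add J x = {add (mul x s) j | s j. j \<in> J}"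

definition gamma_verts :: "('r \<Rightarrow> 'r \<Rightarrow> 'r) \<Rightarrow> ('r \<Rightarrow> 'r \<Rightarrow> 'r) \<Rightarrow> 'r set \<Rightarrow> 'r set" where
  "gamma_verts mul add J = {x. x \<notin> J \<and> princ_plus mul add J x \<noteq> UNIV}"

definition gamma_adj :: "('r \<Rightarrow> 'r \<Rightarrow> 'r) \<Rightarrow> ('r \<Rightarrow> 'r \<Rightarrow> 'r) \<Rightarrow> 'r set \<Rightarrow> 'r \<Rightarrow> 'r \<Rightarrow> bool" where
  "gamma_adj mul add J x y \<longleftrightarrow> x \<in> gamma_verts mul add J \<and> y \<in> gamma_verts mul add J \<and> x \<noteq> y
     \<and> x \<notin> princ_plus mul add J y \<and> y \<notin> princ_plus mul add J x"

definition prod_mul :: "'a::comm_ring_1 \<times> 'b::comm_ring_1 \<Rightarrow> 'a \<times> 'b \<Rightarrow> 'a \<times> 'b" where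
  "prod_mul x y = (fst x * fst y, snd x * snd y)"

definition prod_add :: "'a::comm_ring_1 \<times> 'b::comm_ring_1 \<Rightarrow> 'a \<times> 'b \<Rightarrow> 'a \<times> 'b" where
  "prod_add x y = (fst x + fst y, snd x + snd y)"

definition totally_disconnected :: "('r \<Rightarrow> 'r \<Rightarrow> bool) \<Rightarrow> bool" where
  "totally_disconnected E \<longleftrightarrow> \<not> (\<exists>x y. E x y)"

definition has_cycle :: "'r set \<Rightarrow> ('r \<Rightarrow> 'r \<Rightarrow> bool) \<Rightarrow> nat \<Rightarrow> bool" where
  "has_cycle V E n \<longleftrightarrow> n \<ge> 3 \<and> (\<exists>xs. length xs = n \<and> distinct xs \<and> set xs \<subseteq> V
       \<and> (\<forall>i<n. E (xs ! i) (xs ! ((i + 1) mod n))))"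

definition girth :: "'r set \<Rightarrow> ('r \<Rightarrow> 'r \<Rightarrow> bool) \<Rightarrow> enat" where
  "girth V E = (if \<exists>n. has_cycle V E n then enat (LEAST n. has_cycle V E n) else \<infinity>)"

end

theory Submission
  imports Defs
begin

text \<open>Since \<open>(x1, x2)S + I\<close> is the product of \<open>x1R1 + I1\<close> and \<open>x2R2 + I2\<close>, an edge of
  \<open>\<Gamma>''(R1)\<close> lifts to an edge between \<open>(a, c)\<close> and \<open>(b, c)\<close>, and every \<open>(x, 0)\<close> with \<open>x \<notin> I1\<close>
  is adjacent to every \<open>(0, y)\<close> with \<open>y \<notin> I2\<close>. For (a), an edge \<open>a \<sim> b\<close> of \<open>\<Gamma>''(R1)\<close> gives the
  triangle \<open>(a, 0), (b, 0), (0, 1)\<close>. For (b), elements \<open>1 \<noteq> u \<notin> I1\<close> and \<open>1 \<noteq> v \<notin> I2\<close> give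
  the square \<open>(1, 0), (0, 1), (u, 0), (0, v)\<close>.\<close>

lemma zero_mem_ideal: "is_ideal I \<Longrightarrow> 0 \<in> I"
  unfolding is_ideal_def by blast

lemma one_notin_ideal:
  assumes "is_ideal I" and "I \<noteq> UNIV"
  shows "1 \<notin> I"
  using assms unfolding is_ideal_def by (metis UNIV_eq_I mult.right_neutral)

lemma princ_plus_zero: "is_ideal J \<Longrightarrow> princ_plus (*) (+) J 0 = J"
  unfolding princ_plus_def is_ideal_def by auto

lemma princ_plus_prod:
  "princ_plus prod_mul prod_add (I1 \<times> I2) (x1, x2)
     = princ_plus (*) (+) I1 x1 \<times> princ_plus (*) (+) I2 x2"
proof (intro set_eqI iffI)
  fix y assume "y \<in> princ_plus prod_mul prod_add (I1 \<times> I2) (x1, x2)"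
  then show "y \<in> princ_plus (*) (+) I1 x1 \<times> princ_plus (*) (+) I2 x2"
    unfolding princ_plus_def prod_mul_def prod_add_def by force
next
  fix y assume "y \<in> princ_plus (*) (+) I1 x1 \<times> princ_plus (*) (+) I2 x2"
  then obtain s1 j1 s2 j2 where "j1 \<in> I1" "j2 \<in> I2" "y = (x1 * s1 + j1, x2 * s2 + j2)"
    unfolding princ_plus_def by auto
  then show "y \<in> princ_plus prod_mul prod_add (I1 \<times> I2) (x1, x2)"
    unfolding princ_plus_def prod_mul_def prod_add_def
    by (intro CollectI exI[of _ "(s1, s2)"] exI[of _ "(j1, j2)"]) auto
qed

lemma Times_eq_UNIV_iff: "A \<times> B = UNIV \<longleftrightarrow> A = UNIV \<and> B = UNIV"
  by (metis UNIV_Times_UNIV UNIV_not_empty times_eq_iff)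

lemma gamma_verts_prod_iff:
  "(x1, x2) \<in> gamma_verts prod_mul prod_add (I1 \<times> I2) \<longleftrightarrow>
     (x1 \<notin> I1 \<or> x2 \<notin> I2) \<and>
     (princ_plus (*) (+) I1 x1 \<noteq> UNIV \<or> princ_plus (*) (+) I2 x2 \<noteq> UNIV)"
  unfolding gamma_verts_def by (simp add: princ_plus_prod Times_eq_UNIV_iff)

lemma gamma_adj_prod_iff:
  "gamma_adj prod_mul prod_add (I1 \<times> I2) (x1, x2) (y1, y2) \<longleftrightarrow>
     (x1, x2) \<in> gamma_verts prod_mul prod_add (I1 \<times> I2) \<and>
     (y1, y2) \<in> gamma_verts prod_mul prod_add (I1 \<times> I2) \<and> (x1, x2) \<noteq> (y1, y2) \<and>
     \<not> (x1 \<in> princ_plus (*) (+) I1 y1 \<and> x2 \<in> princ_plus (*) (+) I2 y2) \<and>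
     \<not> (y1 \<in> princ_plus (*) (+) I1 x1 \<and> y2 \<in> princ_plus (*) (+) I2 x2)"
  unfolding gamma_adj_def by (simp only: princ_plus_prod mem_Times_iff fst_conv snd_conv)

lemma gamma_adj_sym: "gamma_adj mul add J x y \<Longrightarrow> gamma_adj mul add J y x"
  unfolding gamma_adj_def by blast

lemma gamma_adj_irrefl: "gamma_adj mul add J x y \<Longrightarrow> x \<noteq> y"
  unfolding gamma_adj_def by blast

lemma gamma_adj_prod_fst:
  "gamma_adj (*) (+) I1 a b \<Longrightarrow> gamma_adj prod_mul prod_add (I1 \<times> I2) (a, c) (b, c)"
  unfolding gamma_adj_prod_iff gamma_verts_prod_iff by (auto simp: gamma_adj_def gamma_verts_def)

lemma gamma_adj_prod_snd:
  "gamma_adj (*) (+) I2 a b \<Longrightarrow> gamma_adj prod_mul prod_add (I1 \<times> I2) (c, a) (c, b)"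
  unfolding gamma_adj_prod_iff gamma_verts_prod_iff by (auto simp: gamma_adj_def gamma_verts_def)

lemma gamma_adj_prod_cross:
  assumes "is_ideal I1" and "is_ideal I2" and "x \<notin> I1" and "y \<notin> I2"
  shows "gamma_adj prod_mul prod_add (I1 \<times> I2) (x, 0) (0, y)"
  using assms zero_mem_ideal[OF assms(1)]
  by (auto simp: gamma_adj_prod_iff gamma_verts_prod_iff princ_plus_zero)

lemma has_cycle_3:
  assumes "{x, y, z} \<subseteq> V" and "distinct [x, y, z]" and "E x y" "E y z" "E z x"
  shows "has_cycle V E 3"
  unfolding has_cycle_def
proof (intro conjI exI[of _ "[x, y, z]"] allI impI)
  fix i :: nat assume "i < 3"
  then consider "i = 0" | "i = 1" | "i = 2" by linarith
  then show "E ([x, y, z] ! i) ([x, y, z] ! ((i + 1) mod 3))" by cases (use assms in auto)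
qed (use assms in auto)

lemma has_cycle_4:
  assumes "{x, y, z, w} \<subseteq> V" and "distinct [x, y, z, w]"
    and "E x y" "E y z" "E z w" "E w x"
  shows "has_cycle V E 4"
  unfolding has_cycle_def
proof (intro conjI exI[of _ "[x, y, z, w]"] allI impI)
  fix i :: nat assume "i < 4"
  then consider "i = 0" | "i = 1" | "i = 2" | "i = 3" by linarith
  then show "E ([x, y, z, w] ! i) ([x, y, z, w] ! ((i + 1) mod 4))" by cases (use assms in auto)
qed (use assms in auto)

lemma girth_le: "has_cycle V E n \<Longrightarrow> girth V E \<le> n"
  unfolding girth_def by (auto intro: Least_le)

lemma girth_eq_3: "has_cycle V E 3 \<Longrightarrow> girth V E = 3"
proof -
  assume cycle: "has_cycle V E 3"
  have "(LEAST n. has_cycle V E n) = 3"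
    by (rule Least_equality) (use cycle in \<open>auto simp: has_cycle_def\<close>)
  then show ?thesis
    using cycle unfolding girth_def by (auto simp: numeral_eq_enat)
qed

lemma gamma_verts_of_adj:
  "gamma_adj mul add J x y \<Longrightarrow> x \<in> gamma_verts mul add J \<and> y \<in> gamma_verts mul add J"
  unfolding gamma_adj_def by blast

lemma triangle_prod_fst:
  assumes "is_ideal I1" and "is_ideal I2" and "1 \<notin> I2" and ab: "gamma_adj (*) (+) I1 a b"
  shows "has_cycle (gamma_verts prod_mul prod_add (I1 \<times> I2)) (gamma_adj prod_mul prod_add (I1 \<times> I2)) 3"
proof -
  have "a \<notin> I1" "b \<notin> I1"
    using gamma_verts_of_adj[OF ab] unfolding gamma_verts_def by auto
  then have "gamma_adj prod_mul prod_add (I1 \<times> I2) (a, 0) (b, 0)"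
    and "gamma_adj prod_mul prod_add (I1 \<times> I2) (b, 0) (0, 1)"
    and "gamma_adj prod_mul prod_add (I1 \<times> I2) (0, 1) (a, 0)"
    using assms by (auto intro: gamma_adj_prod_fst gamma_adj_prod_cross gamma_adj_sym)
  then show ?thesis
    by (intro has_cycle_3) (auto dest: gamma_verts_of_adj gamma_adj_irrefl)
qed

lemma triangle_prod_snd:
  assumes "is_ideal I1" and "is_ideal I2" and "1 \<notin> I1" and ab: "gamma_adj (*) (+) I2 a b"
  shows "has_cycle (gamma_verts prod_mul prod_add (I1 \<times> I2)) (gamma_adj prod_mul prod_add (I1 \<times> I2)) 3"
proof -
  have "a \<notin> I2" "b \<notin> I2"
    using gamma_verts_of_adj[OF ab] unfolding gamma_verts_def by auto
  then have "gamma_adj prod_mul prod_add (I1 \<times> I2) (0, a) (0, b)"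
    and "gamma_adj prod_mul prod_add (I1 \<times> I2) (0, b) (1, 0)"
    and "gamma_adj prod_mul prod_add (I1 \<times> I2) (1, 0) (0, a)"
    using assms by (auto intro: gamma_adj_prod_snd gamma_adj_prod_cross gamma_adj_sym)
  then show ?thesis
    by (intro has_cycle_3) (auto dest: gamma_verts_of_adj gamma_adj_irrefl)
qed

lemma square_prod:
  assumes "is_ideal I1" and "is_ideal I2"
    and "1 \<notin> I1" and "u \<notin> I1" and "u \<noteq> 1"
    and "1 \<notin> I2" and "v \<notin> I2" and "v \<noteq> 1"
  shows "has_cycle (gamma_verts prod_mul prod_add (I1 \<times> I2)) (gamma_adj prod_mul prod_add (I1 \<times> I2)) 4"
proof -
  have "gamma_adj prod_mul prod_add (I1 \<times> I2) (1, 0) (0, 1)"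
    and "gamma_adj prod_mul prod_add (I1 \<times> I2) (0, 1) (u, 0)"
    and "gamma_adj prod_mul prod_add (I1 \<times> I2) (u, 0) (0, v)"
    and "gamma_adj prod_mul prod_add (I1 \<times> I2) (0, v) (1, 0)"
    using assms by (auto intro: gamma_adj_prod_cross gamma_adj_sym)
  moreover have "u \<noteq> 0" "v \<noteq> 0"
    using assms zero_mem_ideal by metis+
  ultimately show ?thesis
    using assms by (intro has_cycle_4) (auto dest: gamma_verts_of_adj)
qed

theorem proposition2p8:
  fixes I1 :: "'a::comm_ring_1 set" and I2 :: "'b::comm_ring_1 set"
  assumes "is_ideal I1" and "I1 \<noteq> UNIV"
      and "is_ideal I2" and "I2 \<noteq> UNIV"
  shows "(\<not> totally_disconnected (gamma_adj (*) (+) I1) \<or> \<not> totally_disconnected (gamma_adj (*) (+) I2)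
            \<longrightarrow> girth (gamma_verts prod_mul prod_add (I1 \<times> I2)) (gamma_adj prod_mul prod_add (I1 \<times> I2)) = 3)
       \<and> (UNIV - I1 \<noteq> {1} \<and> UNIV - I2 \<noteq> {1}
            \<longrightarrow> girth (gamma_verts prod_mul prod_add (I1 \<times> I2)) (gamma_adj prod_mul prod_add (I1 \<times> I2)) \<le> 4)"
proof -
  let ?V = "gamma_verts prod_mul prod_add (I1 \<times> I2)"
  let ?E = "gamma_adj prod_mul prod_add (I1 \<times> I2)"
  have one1: "1 \<notin> I1" and one2: "1 \<notin> I2"
    using assms one_notin_ideal by blast+
  have "girth ?V ?E = 3"
    if "\<not> totally_disconnected (gamma_adj (*) (+) I1) \<or> \<not> totally_disconnected (gamma_adj (*) (+) I2)"
    using that triangle_prod_fst[OF assms(1,3) one2] triangle_prod_snd[OF assms(1,3) one1]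
    unfolding totally_disconnected_def by (metis girth_eq_3)
  moreover have "girth ?V ?E \<le> 4" if nontrivial: "UNIV - I1 \<noteq> {1} \<and> UNIV - I2 \<noteq> {1}"
  proof -
    obtain u v where "u \<notin> I1" "u \<noteq> 1" "v \<notin> I2" "v \<noteq> 1"
      using nontrivial one1 one2 by blast
    then have "has_cycle ?V ?E 4"
      using square_prod assms(1,3) one1 one2 by blast
    then show ?thesis
      using girth_le by (metis numeral_eq_enat)
  qed
  ultimately show ?thesis by blast
qed

end
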